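(* With the notation below, fix $m\ge1$, $\ell$, $a=u_1<\cdots<u_{\ell+1}=b$ and a constraint set $\mathcal A$. Let $c^*(m)$ be the optimal value of the $SDPA$ problem and $y^*(m)$ the optimal value of the $SDP_0$ problem (both defined below), and suppose $y^*(m)>0$. Then $$c^*(m)\le \frac{1+y^*(m)}{y^*(m)}.$$ In particular the $SDPA$ bound is at most the $SDP_0$ bound.
   Context: Let $\Phi_k(t)=\sum_{d=0}^k p_{kd}t^d$ ($k\ge0$) be real polynomials of degree $k$ (the zonal spherical functions of a 2-point-homogeneous space, normalized by $\Phi_k(\tau_0)=1$), and let $a<b$ be reals. For reals $s_0,\ldots,s_{2m-1}$ and $\alpha<\beta$: $R_m=(s_{i+j-2})_{i,j=1}^m$, $F_m^+(\alpha)=(s_{i+j-1}-\alpha s_{i+j-2})_{i,j=1}^m$, $F_m^-(\beta)=(\beta s_{i+j-2}-s_{i+j-1})_{i,j=1}^m$, $H_m(s_0,\ldots,s_{2m-1},[\alpha,\beta])=\operatorname{diag}(R_m,F_m^+(\alpha),F_m^-(\beta))$. $SDP_0$ problem: minimize $y$ over reals $y,x_1,\ldots,x_{2m-1}$ subject to $y+\sum_{i=1}^k p_{ki}x_i\ge -p_{k0}$ for $k=1,\ldots,2m-1$ and $H_m(1,x_1,\ldots,x_{2m-1},[a,b])\succeq0$. $SDPA$ problem: given an integer $\ell\ge1$, reals $a=u_1<\cdots<u_{\ell+1}=b$, and an arbitrary additional set $\mathcal A$ of constraints on $(c,(x_i^{(k)}))$, maximize $c$ over reals $c,z,(x_i^{(k)})_{1\le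 i\le\ell,\,0\le k\le 2m-1}$ subject to: $\begin{pmatrix}1&c\\ c&z\end{pmatrix}\succeq0$; $z=c+\sum_{i=1}^\ell x_i^{(0)}$; $c+\sum_{d=0}^k p_{kd}\sum_{i=1}^\ell x_i^{(d)}\ge0$ for $k=1,\ldots,2m-1$; $H_m(x_i^{(0)},\ldots,x_i^{(2m-1)},[u_i,u_{i+1}])\succeq0$ for $i=1,\ldots,\ell$; and the constraints $\mathcal A$. Optimal values are understood as infimum/supremum. *)

theory Defs
  imports "HOL-Analysis.Analysis"
begin

text \<open>Square real matrices of size n are represented as functions nat => nat => real,
  only the entries with indices < n being relevant (0-based indexing).\<close>

definition psd :: "nat \<Rightarrow> (nat \<Rightarrow> nat \<Rightarrow> real) \<Rightarrow> bool" where
  "psd n M \<longleftrightarrow> (\<forall>i<n. \<forall>j<n. M i j = M j i) \<and>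
      (\<forall>v :: nat \<Rightarrow> real. 0 \<le> (\<Sum>i<n. \<Sum>j<n. v i * M i j * v j))"

definition mat2 :: "real \<Rightarrow> real \<Rightarrow> real \<Rightarrow> real \<Rightarrow> nat \<Rightarrow> nat \<Rightarrow> real" where
  "mat2 a11 a12 a21 a22 = (\<lambda>i j. if i = 0 then (if j = 0 then a11 else a12)
                                  else (if j = 0 then a21 else a22))"

definition Rm :: "(nat \<Rightarrow> real) \<Rightarrow> nat \<Rightarrow> nat \<Rightarrow> real" where
  "Rm s = (\<lambda>i j. s (i + j))"

definition Fplus :: "(nat \<Rightarrow> real) \<Rightarrow> real \<Rightarrow> nat \<Rightarrow> nat \<Rightarrow> real" where
  "Fplus s \<alpha> = (\<lambda>i j. s (i + j + 1) - \<alpha> * s (i + j))"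

definition Fminus :: "(nat \<Rightarrow> real) \<Rightarrow> real \<Rightarrow> nat \<Rightarrow> nat \<Rightarrow> real" where
  "Fminus s \<beta> = (\<lambda>i j. \<beta> * s (i + j) - s (i + j + 1))"

definition block_diag3 ::
  "nat \<Rightarrow> (nat \<Rightarrow> nat \<Rightarrow> real) \<Rightarrow> (nat \<Rightarrow> nat \<Rightarrow> real) \<Rightarrow> (nat \<Rightarrow> nat \<Rightarrow> real)
     \<Rightarrow> nat \<Rightarrow> nat \<Rightarrow> real" where
  "block_diag3 m A B C = (\<lambda>i j.
      if i < m \<and> j < m then A i j
      else if m \<le> i \<and> i < 2*m \<and> m \<le> j \<and> j < 2*m then B (i - m) (j - m)
      else if 2*m \<le> i \<and> i < 3*m \<and> 2*m \<le> j \<and> j < 3*m then C (i - 2*m) (j - 2*m)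
      else 0)"

definition Hm :: "nat \<Rightarrow> (nat \<Rightarrow> real) \<Rightarrow> real \<Rightarrow> real \<Rightarrow> nat \<Rightarrow> nat \<Rightarrow> real" where
  "Hm m s \<alpha> \<beta> = block_diag3 m (Rm s) (Fplus s \<alpha>) (Fminus s \<beta>)"

text \<open>Feasible set of SDP_0: x 1, ..., x (2m-1) (x 0 is ignored and replaced by 1).\<close>
definition SDP0_feasible ::
  "(nat \<Rightarrow> nat \<Rightarrow> real) \<Rightarrow> nat \<Rightarrow> real \<Rightarrow> real \<Rightarrow> real \<Rightarrow> (nat \<Rightarrow> real) \<Rightarrow> bool" where
  "SDP0_feasible p m a b y x \<longleftrightarrow>
     (\<forall>k\<in>{1..2*m-1}. y + (\<Sum>i=1..k. p k i * x i) \<ge> - p k 0) \<and>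
     psd (3*m) (Hm m (\<lambda>i. if i = 0 then 1 else x i) a b)"

definition SDP0_opt :: "(nat \<Rightarrow> nat \<Rightarrow> real) \<Rightarrow> nat \<Rightarrow> real \<Rightarrow> real \<Rightarrow> ereal" where
  "SDP0_opt p m a b = Inf {ereal y | y. \<exists>x. SDP0_feasible p m a b y x}"

text \<open>Feasibility for SDPA: x i d stands for x_i^{(d)}, 1 <= i <= l, 0 <= d <= 2m-1;
  A is the additional constraint set on (c, x).\<close>
definition SDPA_feasible ::
  "(nat \<Rightarrow> nat \<Rightarrow> real) \<Rightarrow> nat \<Rightarrow> nat \<Rightarrow> (nat \<Rightarrow> real) \<Rightarrow> (real \<Rightarrow> (nat \<Rightarrow> nat \<Rightarrow> real) \<Rightarrow> bool)
     \<Rightarrow> real \<Rightarrow> real \<Rightarrow> (nat \<Rightarrow> nat \<Rightarrow> real) \<Rightarrow> bool" where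
  "SDPA_feasible p m l u A c z x \<longleftrightarrow>
     psd 2 (mat2 1 c c z) \<and>
     z = c + (\<Sum>i=1..l. x i 0) \<and>
     (\<forall>k\<in>{1..2*m-1}. c + (\<Sum>d=0..k. p k d * (\<Sum>i=1..l. x i d)) \<ge> 0) \<and>
     (\<forall>i\<in>{1..l}. psd (3*m) (Hm m (x i) (u i) (u (i+1)))) \<and>
     A c x"

definition SDPA_opt ::
  "(nat \<Rightarrow> nat \<Rightarrow> real) \<Rightarrow> nat \<Rightarrow> nat \<Rightarrow> (nat \<Rightarrow> real) \<Rightarrow> (real \<Rightarrow> (nat \<Rightarrow> nat \<Rightarrow> real) \<Rightarrow> bool)
     \<Rightarrow> ereal" where
  "SDPA_opt p m l u A = Sup {ereal c | c. \<exists>z x. SDPA_feasible p m l u A c z x}"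

end

theory Submission imports Defs begin

text \<open>Let (c, z, x) be SDPA-feasible with c > 1 (otherwise there is nothing to show, as the
  bound exceeds 1). Each H_m(x_i, [u_i, u_{i+1}]) is a moment condition on a subinterval of
  [a, b], so the aggregated moments S_d = \<Sum>_i x_i^(d) satisfy H_m(S, [a, b]) \<succeq> 0; the 2 x 2
  constraint gives S_0 = z - c \<ge> c^2 - c > 0. Dividing by S_0 yields an SDP_0-feasible point
  with objective c / S_0, hence y* \<le> c / S_0 \<le> 1 / (c - 1), i.e. c \<le> (1 + y*) / y*.\<close>

definition quad_form :: "nat \<Rightarrow> (nat \<Rightarrow> nat \<Rightarrow> real) \<Rightarrow> (nat \<Rightarrow> real) \<Rightarrow> real" where
  "quad_form n M v = (\<Sum>i<n. \<Sum>j<n. v i * M i j * v j)"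

lemma psd_iff_quad_form:
  "psd n M \<longleftrightarrow> (\<forall>i<n. \<forall>j<n. M i j = M j i) \<and> (\<forall>v. 0 \<le> quad_form n M v)"
  unfolding psd_def quad_form_def by simp

lemma quad_form_sum: "quad_form n (\<lambda>i j. \<Sum>k\<in>K. M k i j) v = (\<Sum>k\<in>K. quad_form n (M k) v)"
  unfolding quad_form_def
  by (simp add: sum_distrib_left sum_distrib_right sum.swap[of _ K] algebra_simps)

lemma psd_sum:
  assumes "\<And>k. k \<in> K \<Longrightarrow> psd n (M k)"
  shows "psd n (\<lambda>i j. \<Sum>k\<in>K. M k i j)"
  using assms unfolding psd_iff_quad_form quad_form_sum by (auto intro: sum.cong sum_nonneg)

lemma psd_add: "psd n M \<Longrightarrow> psd n N \<Longrightarrow> psd n (\<lambda>i j. M i j + N i j)"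
  unfolding psd_iff_quad_form quad_form_def by (simp add: sum.distrib algebra_simps)

lemma psd_scale:
  assumes "psd n M" and "0 \<le> t"
  shows "psd n (\<lambda>i j. t * M i j)"
proof -
  have "quad_form n (\<lambda>i j. t * M i j) v = t * quad_form n M v" for v
    unfolding quad_form_def by (simp add: sum_distrib_left algebra_simps)
  with assms show ?thesis
    unfolding psd_iff_quad_form by simp
qed

lemma psd_mat2_one_imp_square_le:
  assumes "psd 2 (mat2 1 c c z)"
  shows "c\<^sup>2 \<le> z"
proof -
  have "\<forall>v. 0 \<le> (\<Sum>i<2. \<Sum>j<2. v i * mat2 1 c c z i j * v j)"
    using assms unfolding psd_def by blast
  then have "0 \<le> (\<Sum>i<2. \<Sum>j<2. (if i = 0 then -c else 1) * mat2 1 c c z i j * (if j = 0 then -c else 1))"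
    by (rule allE)
  then show ?thesis by (simp add: numeral_2_eq_2 mat2_def lessThan_Suc power2_eq_square)
qed

lemma sum_lessThan_3_mult:
  fixes f :: "nat \<Rightarrow> real"
  shows "(\<Sum>i<3*m. f i) = (\<Sum>i<m. f i) + (\<Sum>i<m. f (m+i)) + (\<Sum>i<m. f (2*m+i))"
proof -
  have shift: "(\<Sum>i<a+b. g i) = (\<Sum>i<a. g i) + (\<Sum>i<b. g (a+i))" for a b and g :: "nat \<Rightarrow> real"
    by (induction b) (auto simp: add.assoc)
  have "3*m = m + (m + m)" by simp
  then show ?thesis
    by (simp only: shift) (simp add: add.assoc mult_2)
qed

lemma quad_form_block_diag3:
  "quad_form (3*m) (block_diag3 m A B C) v
     = quad_form m A v + quad_form m B (\<lambda>i. v (m+i)) + quad_form m C (\<lambda>i. v (2*m+i))"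
  unfolding quad_form_def sum_lessThan_3_mult block_diag3_def
  by (simp add: sum.distrib)

lemma psd_block_diag3_iff:
  "psd (3*m) (block_diag3 m A B C) \<longleftrightarrow> psd m A \<and> psd m B \<and> psd m C"
proof
  assume psd: "psd (3*m) (block_diag3 m A B C)"
  have sym: "block_diag3 m A B C i j = block_diag3 m A B C j i" if "i < 3*m" "j < 3*m" for i j
    using psd that unfolding psd_def by blast
  have "A i j = A j i" "B i j = B j i" "C i j = C j i" if "i < m" "j < m" for i j
    using sym[of i j] sym[of "m+i" "m+j"] sym[of "2*m+i" "2*m+j"] that
    by (simp_all add: block_diag3_def)
  moreover
  have nonneg: "0 \<le> quad_form m A v + quad_form m B (\<lambda>i. v (m+i)) + quad_form m C (\<lambda>i. v (2*m+i))" for v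
    using psd unfolding psd_iff_quad_form quad_form_block_diag3 by blast
  have "0 \<le> quad_form m A w" "0 \<le> quad_form m B w" "0 \<le> quad_form m C w" for w
    using nonneg[of "\<lambda>i. if i < m then w i else 0"]
      nonneg[of "\<lambda>i. if m \<le> i \<and> i < 2*m then w (i - m) else 0"]
      nonneg[of "\<lambda>i. if 2*m \<le> i then w (i - 2*m) else 0"]
    by (simp_all add: quad_form_def)
  ultimately show "psd m A \<and> psd m B \<and> psd m C"
    by (simp add: psd_iff_quad_form)
next
  assume "psd m A \<and> psd m B \<and> psd m C"
  then show "psd (3*m) (block_diag3 m A B C)"
    unfolding psd_iff_quad_form quad_form_block_diag3
    by (auto simp: block_diag3_def)
qed

lemma psd_Hm_iff:
  "psd (3*m) (Hm m s \<alpha> \<beta>) \<longleftrightarrow> psd m (Rm s) \<and> psd m (Fplus s \<alpha>) \<and> psd m (Fminus s \<beta>)"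
  unfolding Hm_def by (rule psd_block_diag3_iff)

lemma psd_Hm_sum_subintervals:
  assumes H: "\<And>k. k \<in> K \<Longrightarrow> psd (3*m) (Hm m (x k) (\<alpha> k) (\<beta> k))"
    and lower: "\<And>k. k \<in> K \<Longrightarrow> a \<le> \<alpha> k"
    and upper: "\<And>k. k \<in> K \<Longrightarrow> \<beta> k \<le> b"
  shows "psd (3*m) (Hm m (\<lambda>d. \<Sum>k\<in>K. x k d) a b)"
proof -
  have blocks: "psd m (Rm (x k))" "psd m (Fplus (x k) (\<alpha> k))" "psd m (Fminus (x k) (\<beta> k))"
    if "k \<in> K" for k
    using H[OF that] by (simp_all add: psd_Hm_iff)
  have "Rm (\<lambda>d. \<Sum>k\<in>K. x k d) = (\<lambda>i j. \<Sum>k\<in>K. Rm (x k) i j)"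
    by (simp add: Rm_def)
  moreover have "Fplus (\<lambda>d. \<Sum>k\<in>K. x k d) a
      = (\<lambda>i j. \<Sum>k\<in>K. Fplus (x k) (\<alpha> k) i j + (\<alpha> k - a) * Rm (x k) i j)"
    by (simp add: Rm_def Fplus_def algebra_simps sum.distrib sum_distrib_left sum_subtractf)
  moreover have "Fminus (\<lambda>d. \<Sum>k\<in>K. x k d) b
      = (\<lambda>i j. \<Sum>k\<in>K. Fminus (x k) (\<beta> k) i j + (b - \<beta> k) * Rm (x k) i j)"
    by (simp add: Rm_def Fminus_def algebra_simps sum.distrib sum_distrib_left sum_subtractf)
  ultimately show ?thesis
    using blocks lower upper
    by (simp add: psd_Hm_iff psd_sum psd_add psd_scale)
qed

lemma psd_Hm_scale:
  assumes "psd (3*m) (Hm m s \<alpha> \<beta>)" and "0 \<le> t"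
  shows "psd (3*m) (Hm m (\<lambda>d. t * s d) \<alpha> \<beta>)"
proof -
  have "Rm (\<lambda>d. t * s d) = (\<lambda>i j. t * Rm s i j)"
    "Fplus (\<lambda>d. t * s d) \<alpha> = (\<lambda>i j. t * Fplus s \<alpha> i j)"
    "Fminus (\<lambda>d. t * s d) \<beta> = (\<lambda>i j. t * Fminus s \<beta> i j)"
    by (auto simp: Rm_def Fplus_def Fminus_def algebra_simps)
  then show ?thesis
    using assms by (simp add: psd_Hm_iff psd_scale)
qed

lemma increasing_subdivision_bounds:
  fixes u :: "nat \<Rightarrow> real"
  assumes "\<And>i. 1 \<le> i \<Longrightarrow> i \<le> l \<Longrightarrow> u i < u (i+1)" and "k \<in> {1..l}"
  shows "u 1 \<le> u k" and "u (k+1) \<le> u (l+1)"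
proof -
  have mono: "u i \<le> u j" if "1 \<le> i" "i \<le> j" "j \<le> l+1" for i j
    using that(2,3)
  proof (induction j rule: dec_induct)
    case (step n)
    then show ?case using assms(1)[of n] that(1) by force
  qed simp
  show "u 1 \<le> u k" "u (k+1) \<le> u (l+1)"
    using mono[of 1 k] mono[of "k+1" "l+1"] assms(2) by auto
qed

lemma SDPA_feasible_normalized_SDP0_feasible:
  assumes u1: "u 1 = a" and ul: "u (l+1) = b"
    and umono: "\<And>i. 1 \<le> i \<Longrightarrow> i \<le> l \<Longrightarrow> u i < u (i+1)"
    and feas: "SDPA_feasible p m l u A c z x"
    and S0_def: "S0 = (\<Sum>k=1..l. x k 0)" and S0_pos: "0 < S0"
  shows "SDP0_feasible p m a b (c / S0) (\<lambda>d. (\<Sum>k=1..l. x k d) / S0)"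
proof -
  define S where "S d = (\<Sum>k=1..l. x k d)" for d
  have "psd (3*m) (Hm m S a b)"
    unfolding S_def
    using feas increasing_subdivision_bounds[where u=u and l=l, OF umono] u1 ul
    by (intro psd_Hm_sum_subintervals) (auto simp: SDPA_feasible_def)
  then have "psd (3*m) (Hm m (\<lambda>d. inverse S0 * S d) a b)"
    using S0_pos by (intro psd_Hm_scale) auto
  moreover have "(\<lambda>d. if d = 0 then 1 else S d / S0) = (\<lambda>d. inverse S0 * S d)"
    using S0_pos by (auto simp: S_def S0_def field_simps)
  moreover have "c / S0 + (\<Sum>i=1..k. p k i * (S i / S0)) \<ge> - p k 0" if k: "k \<in> {1..2*m-1}" for k
  proof -
    have "0 \<le> c + (\<Sum>d=0..k. p k d * S d)"
      using feas k by (simp add: SDPA_feasible_def S_def)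
    also have "\<dots> = c + p k 0 * S0 + (\<Sum>d=1..k. p k d * S d)"
      by (simp add: sum.atLeast_Suc_atMost S_def S0_def)
    finally have "0 \<le> (c + p k 0 * S0 + (\<Sum>d=1..k. p k d * S d)) / S0"
      using S0_pos by simp
    also have "\<dots> = c / S0 + p k 0 + (\<Sum>i=1..k. p k i * (S i / S0))"
      using S0_pos by (simp add: add_divide_distrib sum_divide_distrib)
    finally show ?thesis by simp
  qed
  ultimately show ?thesis
    unfolding SDP0_feasible_def S_def by simp
qed

lemma SDPA_feasible_le:
  assumes u1: "u 1 = a" and ul: "u (l+1) = b"
    and umono: "\<And>i. 1 \<le> i \<Longrightarrow> i \<le> l \<Longrightarrow> u i < u (i+1)"
    and ystar: "SDP0_opt p m a b = ereal ystar" and ypos: "0 < ystar"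
    and feas: "SDPA_feasible p m l u A c z x"
  shows "c \<le> (1 + ystar) / ystar"
proof (cases "c \<le> 1")
  case True
  moreover have "1 \<le> (1 + ystar) / ystar" using ypos by (simp add: field_simps)
  ultimately show ?thesis by linarith
next
  case False
  define S0 where "S0 = (\<Sum>k=1..l. x k 0)"
  have "c\<^sup>2 \<le> z" and "z = c + S0"
    using feas psd_mat2_one_imp_square_le by (auto simp: SDPA_feasible_def S0_def)
  then have S0_ge: "c * (c - 1) \<le> S0" by (simp add: power2_eq_square algebra_simps)
  have c_pos: "0 < c * (c - 1)" using False by simp
  then have S0_pos: "0 < S0" using S0_ge by linarith
  have "SDP0_feasible p m a b (c / S0) (\<lambda>d. (\<Sum>k=1..l. x k d) / S0)"
    using SDPA_feasible_normalized_SDP0_feasible[OF u1 ul umono feas S0_def S0_pos] .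
  then have "SDP0_opt p m a b \<le> ereal (c / S0)"
    unfolding SDP0_opt_def by (auto intro: Inf_lower)
  then have "ystar \<le> c / S0" using ystar by simp
  also have "\<dots> \<le> c / (c * (c - 1))"
    using False by (intro divide_left_mono[OF S0_ge] mult_pos_pos S0_pos c_pos) auto
  also have "\<dots> = 1 / (c - 1)" using False by simp
  finally have "ystar * (c - 1) \<le> 1" using False by (simp add: field_simps)
  then show ?thesis using ypos by (simp add: field_simps)
qed

text \<open>Only the subdivision and the value of SDP_0 enter the proof.\<close>

theorem theorem6p2:
  fixes p :: "nat \<Rightarrow> nat \<Rightarrow> real" and \<tau>0 a b :: real and m l :: nat
    and u :: "nat \<Rightarrow> real" and A :: "real \<Rightarrow> (nat \<Rightarrow> nat \<Rightarrow> real) \<Rightarrow> bool"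
    and ystar :: real
  assumes deg: "\<And>k. p k k \<noteq> 0" "\<And>k d. k < d \<Longrightarrow> p k d = 0"
    and norm: "\<And>k. (\<Sum>d=0..k. p k d * \<tau>0 ^ d) = 1"
    and ab: "a < b" and m: "m \<ge> 1" and l: "l \<ge> 1"
    and u1: "u 1 = a" and ul: "u (l+1) = b"
    and umono: "\<And>i. 1 \<le> i \<Longrightarrow> i \<le> l \<Longrightarrow> u i < u (i+1)"
    and ystar: "SDP0_opt p m a b = ereal ystar" and ypos: "ystar > 0"
  shows "SDPA_opt p m l u A \<le> ereal ((1 + ystar) / ystar)"
  unfolding SDPA_opt_def
  using SDPA_feasible_le[OF u1 ul umono ystar ypos] by (auto intro: Sup_least)

end
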